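(* Let $p$ be a prime number and let $H=p\mathbb Z_{p^2}\times p\mathbb Z_{p^2}=\{(pj,pk):j,k\in\mathbb Z\}\subseteq\mathbb Z_{p^2}\times\mathbb Z_{p^2}$ (the unique non-cyclic Lagrangian of $\mathbb Z_{p^2}\times\mathbb Z_{p^2}$). If $A\subseteq\mathbb Z_{p^2}\times\mathbb Z_{p^2}$ complements $H$, i.e. $\{A+h\}_{h\in H}$ is a partition of $\mathbb Z_{p^2}\times\mathbb Z_{p^2}$, then $$\Delta A\cap Z(\widehat{\mathbf 1}_A^{sym})=\emptyset.$$
   Context: Here $n=p^2$. For $x=(x_1,x_2),y=(y_1,y_2)\in\mathbb Z_n\times\mathbb Z_n$ the symplectic form is $\langle x,y\rangle_s=x_1y_2-x_2y_1$. For $A\subseteq\mathbb Z_n\times\mathbb Z_n$, $\widehat{\mathbf 1}_A^{sym}(\xi)=\sum_{a\in A}e^{\frac{2\pi i}{n}\langle a,\xi\rangle_s}$ and $Z(\widehat{\mathbf 1}_A^{sym})=\{\xi:\widehat{\mathbf 1}_A^{sym}(\xi)=0\}$. The difference set is $\Delta A=\{a-a':a,a'\in A,\ a\neq a'\}$. A Lagrangian is a subset $H$ with $H=H^{\perp_s}$, where $H^{\perp_s}=\{g:\langle g,h\rangle_s=0\ \forall h\in H\}$; Lagrangians are exactly the subgroups of order $n$, and the only non-cyclic one in $\mathbb Z_{p^2}\times\mathbb Z_{p^2}$ is $p\mathbb Z_{p^2}\times p\mathbb Z_{p^2}$. *)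

theory Defs
  imports "HOL-Analysis.Analysis"
begin

definition ZnZn :: "int \<Rightarrow> (int \<times> int) set" where
  "ZnZn n = {0..<n} \<times> {0..<n}"

definition zadd :: "int \<Rightarrow> int \<times> int \<Rightarrow> int \<times> int \<Rightarrow> int \<times> int" where
  "zadd n x y = ((fst x + fst y) mod n, (snd x + snd y) mod n)"

definition zsub :: "int \<Rightarrow> int \<times> int \<Rightarrow> int \<times> int \<Rightarrow> int \<times> int" where
  "zsub n x y = ((fst x - fst y) mod n, (snd x - snd y) mod n)"

text \<open>Symplectic form x1 y2 - x2 y1 (its value is only relevant modulo n).\<close>
definition symp :: "int \<times> int \<Rightarrow> int \<times> int \<Rightarrow> int" where
  "symp x y = fst x * snd y - snd x * fst y"

definition sym_ft :: "int \<Rightarrow> (int \<times> int) set \<Rightarrow> int \<times> int \<Rightarrow> complex" where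
  "sym_ft n A \<xi> = (\<Sum>a\<in>A. exp (2 * pi * \<i> * of_int (symp a \<xi>) / of_int n))"

definition zero_set :: "int \<Rightarrow> (int \<times> int) set \<Rightarrow> (int \<times> int) set" where
  "zero_set n A = {\<xi> \<in> ZnZn n. sym_ft n A \<xi> = 0}"

definition diff_set :: "int \<Rightarrow> (int \<times> int) set \<Rightarrow> (int \<times> int) set" where
  "diff_set n A = {zsub n a a' | a a'. a \<in> A \<and> a' \<in> A \<and> a \<noteq> a'}"

definition complements :: "int \<Rightarrow> (int \<times> int) set \<Rightarrow> (int \<times> int) set \<Rightarrow> bool" where
  "complements n A H \<longleftrightarrow> A \<subseteq> ZnZn n \<and>
     (\<forall>g \<in> ZnZn n. \<exists>!ah. ah \<in> A \<times> H \<and> g = zadd n (fst ah) (snd ah))"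

definition pH :: "int \<Rightarrow> (int \<times> int) set" where
  "pH p = {(p * j, p * k) | j k. 0 \<le> j \<and> j < p \<and> 0 \<le> k \<and> k < p}"

end

theory Submission
  imports Defs "HOL-Computational_Algebra.Computational_Algebra"
begin

(* If 1_A^sym vanished at xi = a - a' in Delta A, then the values <b, xi> mod p^2 (b in A) would
   give a vanishing sum of p^2-th roots of unity.  As Phi_{p^2} is irreducible (Eisenstein applied
   to Phi_{p^2}(x + 1)), such a sum has constant multiplicities along each coset j + p Z / p^2 Z.
   Since <a, xi> = <a', xi> mod p^2, the class of <a, xi> mod p is then attained by at least 2p
   elements of A.  But A maps bijectively onto (Z_p)^2 under reduction mod p, and as xi is nonzero
   mod p, the form <-, xi> mod p takes each value on only p points of (Z_p)^2. *)

section \<open>Eisenstein's criterion and minimal degree\<close>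

lemma eisenstein_cofactor_const:
  fixes G g h :: "int poly" and q :: int
  assumes q: "prime q" and monic: "lead_coeff G = 1"
    and low: "\<And>i. i < degree G \<Longrightarrow> q dvd coeff G i"
    and G: "G = g * h" and h0: "\<not> q dvd coeff h 0"
  shows "degree h = 0"
proof (rule ccontr)
  assume "degree h \<noteq> 0"
  have "g \<noteq> 0" "h \<noteq> 0" using monic G by auto
  then have deg: "degree G = degree g + degree h" using G by (simp add: degree_mult_eq)
  have "lead_coeff g * lead_coeff h = 1" using monic G by (simp add: lead_coeff_mult)
  then have lc: "\<not> q dvd lead_coeff g" using q by (metis dvd_mult2 not_prime_unit)
  \<comment> \<open>the lowest coefficient of \<open>g\<close> not divisible by \<open>q\<close> survives in \<open>G\<close> below its degree\<close>
  define r where "r = (LEAST i. \<not> q dvd coeff g i)"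
  have r: "\<not> q dvd coeff g r" "r \<le> degree g"
    unfolding r_def using lc by (rule LeastI, rule Least_le)
  have below: "q dvd coeff g i" if "i < r" for i using that not_less_Least unfolding r_def by blast
  have "coeff G r = (\<Sum>i<r. coeff g i * coeff h (r - i)) + coeff g r * coeff h 0"
    using G by (simp add: coeff_mult lessThan_Suc_atMost[symmetric])
  moreover have "q dvd (\<Sum>i<r. coeff g i * coeff h (r - i))" by (intro dvd_sum) (simp add: below)
  moreover have "q dvd coeff G r" using low deg r(2) \<open>degree h \<noteq> 0\<close> by simp
  ultimately have "q dvd coeff g r * coeff h 0" by (metis dvd_add_right_iff)
  then show False using q r(1) h0 by (simp add: prime_dvd_mult_iff)
qed

lemma eisenstein_irreducible:
  fixes G :: "int poly" and q :: int
  assumes q: "prime q" and monic: "lead_coeff G = 1" and deg: "degree G \<noteq> 0"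
    and low: "\<And>i. i < degree G \<Longrightarrow> q dvd coeff G i" and "\<not> q^2 dvd coeff G 0"
  shows "irreducible G"
proof (rule irreducibleI)
  show "G \<noteq> 0" "\<not> G dvd 1" using deg by (auto simp: is_unit_poly_iff)
next
  fix g h assume G: "G = g * h"
  have "content G = 1" using monic content_dvd_coeff[of G "degree G"] is_unit_content_iff by metis
  then have "content g * content h = 1" using G by (simp add: content_mult)
  then have content: "content g = 1" "content h = 1"
    by (metis dvd_triv_left dvd_triv_right is_unit_content_iff)+
  have "q dvd coeff g 0 * coeff h 0" using low[of 0] deg G by (simp add: coeff_mult_0)
  moreover have "\<not> (q dvd coeff g 0 \<and> q dvd coeff h 0)"
    using \<open>\<not> q^2 dvd coeff G 0\<close> G by (auto simp: power2_eq_square coeff_mult_0 mult_dvd_mono)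
  ultimately have "degree g = 0 \<or> degree h = 0"
    using q monic low G eisenstein_cofactor_const[of q G h g] eisenstein_cofactor_const[of q G g h]
    by (auto simp: prime_dvd_mult_iff mult.commute)
  then show "g dvd 1 \<or> h dvd 1"
    using content by (auto elim!: degree_eq_zeroE simp: is_unit_const_poly_iff)
qed

lemma map_poly_of_int_add:
  "map_poly of_int (p + q) = (map_poly of_int p + map_poly of_int q :: 'a::comm_ring_1 poly)"
  by (rule poly_eqI) (simp add: coeff_map_poly)

lemma map_poly_of_int_mult:
  "map_poly of_int (p * q) = (map_poly of_int p * map_poly of_int q :: 'a::comm_ring_1 poly)"
  by (rule poly_eqI) (simp add: coeff_map_poly coeff_mult)

lemma map_poly_of_int_smult:
  "map_poly of_int (smult c p) = (smult (of_int c) (map_poly of_int p) :: 'a::comm_ring_1 poly)"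
  by (rule poly_eqI) (simp add: coeff_map_poly)

lemma map_poly_of_int_sum:
  "map_poly of_int (sum f A) = (\<Sum>i\<in>A. map_poly of_int (f i) :: 'a::comm_ring_1 poly)"
  by (induction A rule: infinite_finite_induct) (simp_all add: map_poly_of_int_add)

lemma map_poly_of_int_power:
  "map_poly of_int (p ^ n) = (map_poly of_int p ^ n :: 'a::comm_ring_1 poly)"
  by (induction n) (simp_all add: map_poly_of_int_mult)

lemma irreducible_root_degree_le:
  fixes G r :: "int poly" and \<beta> :: "'a::field_char_0"
  assumes irr: "irreducible G" and "poly (map_poly of_int G) \<beta> = 0"
    and "r \<noteq> 0" and "poly (map_poly of_int r) \<beta> = 0"
  shows "degree G \<le> degree r"
proof (cases "degree G = 0")
  case False
  then have content: "content G = 1" using irr nonconst_poly_irreducible_iff by blast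
  define S where "S m \<longleftrightarrow> m \<noteq> 0 \<and> poly (map_poly of_int m) \<beta> = 0" for m :: "int poly"
  obtain m where "S m" and minimal: "\<And>m'. S m' \<Longrightarrow> degree m \<le> degree m'"
    using ex_has_least_nat[of S r degree] assms(3,4) unfolding S_def by blast
  then have "m \<noteq> 0" unfolding S_def by simp
  then obtain a k where "a \<noteq> 0" and div: "smult a G = m * k + pseudo_mod G m"
    using pseudo_mod(1) by blast
  have "poly (map_poly of_int (smult a G)) \<beta> = poly (map_poly of_int (m * k + pseudo_mod G m)) \<beta>"
    by (simp only: div)
  then have "poly (map_poly of_int (pseudo_mod G m)) \<beta> = 0"
    using assms(2) \<open>S m\<close> unfolding S_def
    by (simp add: map_poly_of_int_smult map_poly_of_int_add map_poly_of_int_mult)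
  then have "pseudo_mod G m = 0"
    using pseudo_mod(2)[OF \<open>m \<noteq> 0\<close>] minimal unfolding S_def by force
  \<comment> \<open>so \<open>m\<close> divides a multiple of \<open>G\<close>, and by Gauss's lemma its primitive part divides \<open>G\<close>\<close>
  then have "primitive_part m dvd primitive_part (smult a G)"
    using div by (intro primitive_part_dvd_primitive_partI) simp
  then have "primitive_part m dvd smult (unit_factor a) G"
    by (simp add: primitive_part_smult primitive_part_prim[OF content])
  then have "primitive_part m dvd smult (unit_factor a) (smult (unit_factor a) G)"
    by (rule dvd_smult)
  then have "primitive_part m dvd G"
    using \<open>a \<noteq> 0\<close> by (simp add: unit_factor_int_def)
  then have "G dvd primitive_part m \<or> is_unit (primitive_part m)"
    by (rule irreducibleD'[OF irr])
  moreover have "\<not> is_unit (primitive_part m)"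
  proof
    assume "is_unit (primitive_part m)"
    then have "degree m = 0" by (metis degree_pCons_0 degree_primitive_part is_unit_poly_iff)
    then show False using \<open>S m\<close> unfolding S_def by (auto elim!: degree_eq_zeroE simp: map_poly_pCons)
  qed
  ultimately have "degree G \<le> degree m"
    using \<open>m \<noteq> 0\<close> by (auto dest: dvd_imp_degree_le)
  also have "degree m \<le> degree r" using minimal assms(3,4) unfolding S_def by blast
  finally show ?thesis .
qed simp

section \<open>The cyclotomic polynomial of order p^2\<close>

lemma prime_dvd_power_add_sub:
  fixes x y :: "'a::comm_ring_1"
  assumes "prime p"
  shows "of_nat p dvd (x + y) ^ p - x ^ p - y ^ p"
proof -
  have "p > 0" using assms prime_gt_0_nat by blast
  have "(x + y) ^ p = (\<Sum>k\<le>p. of_nat (p choose k) * x ^ k * y ^ (p - k))"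
    by (rule binomial_ring)
  also have "\<dots> = x ^ p + y ^ p + (\<Sum>k\<in>{1..<p}. of_nat (p choose k) * x ^ k * y ^ (p - k))"
  proof -
    have "{..p} = insert p (insert 0 {1..<p})" using \<open>p > 0\<close> by auto
    then show ?thesis using \<open>p > 0\<close> by (simp add: algebra_simps)
  qed
  finally have "(x + y) ^ p - x ^ p - y ^ p = (\<Sum>k\<in>{1..<p}. of_nat (p choose k) * x ^ k * y ^ (p - k))"
    by simp
  also have "of_nat p dvd \<dots>"
  proof (intro dvd_sum dvd_mult2)
    fix k assume "k \<in> {1..<p}"
    then have "p dvd p choose k" using assms by (intro dvd_choose_prime) auto
    then show "of_nat p dvd (of_nat (p choose k) :: 'a)" by (metis dvd_def of_nat_mult)
  qed
  finally show ?thesis .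
qed

(* Phi_{p^2}(x + 1), where Phi_{p^2}(x) = sum_{k<p} x^(p k) is the p^2-th cyclotomic polynomial
   for p prime. *)
definition shifted_cyclotomic_sq :: "nat \<Rightarrow> int poly" where
  "shifted_cyclotomic_sq p = (\<Sum>k<p. [:1, 1:] ^ (p * k))"

lemma shifted_cyclotomic_sq_mult:
  "shifted_cyclotomic_sq p * ([:1, 1:] ^ p - 1) = [:1, 1:] ^ (p\<^sup>2) - 1"
  using power_diff_1_eq[of "[:1, 1:] ^ p :: int poly" p]
  by (simp add: shifted_cyclotomic_sq_def power_mult[symmetric] power2_eq_square mult.commute)

lemma degree_linear_power_minus_1:
  assumes "n > 0"
  shows "degree ([:1, 1:] ^ n - 1 :: int poly) = n" and "lead_coeff ([:1, 1:] ^ n - 1 :: int poly) = 1"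
proof -
  have top: "coeff ([:1, 1:] ^ n - 1 :: int poly) n = 1"
    using assms lead_coeff_power[of "[:1, 1 :: int:]" n] degree_linear_power[of "1 :: int" n]
    by (simp add: coeff_1)
  have "degree ([:1, 1:] ^ n - 1 :: int poly) \<le> n"
    by (rule degree_diff_le) (simp_all add: degree_linear_power)
  moreover have "n \<le> degree ([:1, 1:] ^ n - 1 :: int poly)" using top by (intro le_degree) simp
  ultimately show "degree ([:1, 1:] ^ n - 1 :: int poly) = n" by simp
  then show "lead_coeff ([:1, 1:] ^ n - 1 :: int poly) = 1" using top by simp
qed

lemma degree_shifted_cyclotomic_sq:
  assumes "p > 0"
  shows "degree (shifted_cyclotomic_sq p) = p\<^sup>2 - p" and "lead_coeff (shifted_cyclotomic_sq p) = 1"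
proof -
  have "p\<^sup>2 > 0" using assms by simp
  note factor = degree_linear_power_minus_1[OF assms] and
    product = degree_linear_power_minus_1[OF this, folded shifted_cyclotomic_sq_mult[of p]]
  have "shifted_cyclotomic_sq p \<noteq> 0" "[:1, 1:] ^ p - 1 \<noteq> (0 :: int poly)"
    using product factor assms by auto
  then have "degree (shifted_cyclotomic_sq p) + p = p\<^sup>2" "lead_coeff (shifted_cyclotomic_sq p) = 1"
    using product factor by (metis degree_mult_eq, metis lead_coeff_mult mult.right_neutral)
  then show "degree (shifted_cyclotomic_sq p) = p\<^sup>2 - p" "lead_coeff (shifted_cyclotomic_sq p) = 1"
    by simp_all
qed

lemma coeff_0_shifted_cyclotomic_sq: "coeff (shifted_cyclotomic_sq p) 0 = int p"
  by (simp add: shifted_cyclotomic_sq_def poly_0_coeff_0[symmetric] poly_sum)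

lemma shifted_cyclotomic_sq_cong_mod_prime:
  assumes "prime p"
  shows "of_nat p dvd shifted_cyclotomic_sq p * [:0, 1:] ^ p - [:0, 1:] ^ (p\<^sup>2)"
proof -
  \<comment> \<open>Frobenius modulo \<open>p\<close>: \<open>(x + 1)^p = x^p + 1\<close>, hence \<open>(x + 1)^(p^2) = x^(p^2) + 1\<close>\<close>
  define X Y where "X = ([:0, 1:] :: int poly)" and "Y = ([:1, 1:] :: int poly)"
  have "Y = X + 1" by (simp add: X_def Y_def one_pCons)
  then have "of_nat p dvd Y ^ p - X ^ p - 1"
    using prime_dvd_power_add_sub[OF assms, of X 1] by simp
  then have "of_nat p dvd (Y ^ p) ^ p - (X ^ p + 1) ^ p"
    using power_diff_sumr2[of "Y ^ p" p "X ^ p + 1"] by (simp add: dvd_mult2 diff_diff_add)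
  moreover have "of_nat p dvd (X ^ p + 1) ^ p - (X ^ p) ^ p - 1"
    using prime_dvd_power_add_sub[OF assms, of "X ^ p" 1] by simp
  ultimately have "of_nat p dvd Y ^ (p\<^sup>2) - 1 - X ^ (p\<^sup>2)"
    using dvd_add by (fastforce simp: power_mult[symmetric] power2_eq_square)
  moreover note \<open>of_nat p dvd Y ^ p - X ^ p - 1\<close>
  ultimately have "of_nat p dvd (Y ^ (p\<^sup>2) - 1 - X ^ (p\<^sup>2)) - shifted_cyclotomic_sq p * (Y ^ p - X ^ p - 1)"
    by simp
  also have "(Y ^ (p\<^sup>2) - 1 - X ^ (p\<^sup>2)) - shifted_cyclotomic_sq p * (Y ^ p - X ^ p - 1) =
      shifted_cyclotomic_sq p * X ^ p - X ^ (p\<^sup>2)"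
    using shifted_cyclotomic_sq_mult[of p] unfolding Y_def[symmetric] by (simp add: algebra_simps)
  finally show ?thesis unfolding X_def .
qed

lemma prime_dvd_coeff_shifted_cyclotomic_sq:
  assumes "prime p" and "i < p\<^sup>2 - p"
  shows "int p dvd coeff (shifted_cyclotomic_sq p) i"
proof -
  have "int p dvd coeff (shifted_cyclotomic_sq p * [:0, 1:] ^ p - [:0, 1:] ^ (p\<^sup>2)) (i + p)"
    using shifted_cyclotomic_sq_cong_mod_prime[OF assms(1)]
    by (simp add: of_nat_poly const_poly_dvd_iff)
  moreover have "coeff (shifted_cyclotomic_sq p * [:0, 1:] ^ p) (i + p) = coeff (shifted_cyclotomic_sq p) i"
    using coeff_monom_mult[of 1 p "shifted_cyclotomic_sq p" "i + p"] by (simp add: monom_altdef mult.commute)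
  moreover have "coeff ([:0, 1:] ^ (p\<^sup>2) :: int poly) (i + p) = 0"
    using assms(2) coeff_monom[of "1 :: int" "p\<^sup>2" "i + p"] by (simp add: monom_altdef)
  ultimately show ?thesis by simp
qed

lemma irreducible_shifted_cyclotomic_sq:
  assumes "prime p"
  shows "irreducible (shifted_cyclotomic_sq p)"
proof -
  have "p > 1" using assms prime_gt_1_nat by blast
  then have "p < p\<^sup>2" by (simp add: power2_eq_square)
  then have "\<not> p\<^sup>2 dvd p" using \<open>p > 1\<close> by (auto dest: dvd_imp_le)
  then have "\<not> (int p)\<^sup>2 dvd coeff (shifted_cyclotomic_sq p) 0"
    unfolding coeff_0_shifted_cyclotomic_sq by (metis of_nat_dvd_iff of_nat_power)
  moreover have "degree (shifted_cyclotomic_sq p) = p\<^sup>2 - p" "lead_coeff (shifted_cyclotomic_sq p) = 1"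
    using degree_shifted_cyclotomic_sq \<open>p > 1\<close> by auto
  ultimately show ?thesis
    using assms \<open>p < p\<^sup>2\<close> prime_dvd_coeff_shifted_cyclotomic_sq[OF assms]
    by (intro eisenstein_irreducible[where q = "int p"]) simp_all
qed

section \<open>Vanishing sums of roots of unity of order p^2\<close>

definition root_unity :: "nat \<Rightarrow> complex" where
  "root_unity n = exp (2 * pi * \<i> / of_nat n)"

lemma root_unity_power: "root_unity n ^ k = exp (2 * pi * \<i> * of_nat k / of_nat n)"
  by (simp add: root_unity_def exp_of_nat_mult[symmetric] mult.commute)

lemma root_unity_power_eq_1_iff:
  assumes "n > 0"
  shows "root_unity n ^ k = 1 \<longleftrightarrow> n dvd k"
  using complex_root_unity_eq_1[of n k] assms by (simp add: root_unity_power)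

lemma sum_root_unity_powers:
  assumes "n > 1"
  shows "(\<Sum>k<n. root_unity n ^ k) = 0"
proof -
  have "root_unity n ^ n - 1 = (root_unity n - 1) * (\<Sum>k<n. root_unity n ^ k)"
    by (rule power_diff_1_eq)
  moreover have "root_unity n ^ n = 1" "root_unity n \<noteq> 1"
    using root_unity_power_eq_1_iff[of n n] root_unity_power_eq_1_iff[of n 1] assms by auto
  ultimately show ?thesis by simp
qed

lemma root_unity_sq_power:
  assumes "p > 0"
  shows "root_unity (p\<^sup>2) ^ p = root_unity p"
  unfolding root_unity_def exp_of_nat_mult[symmetric] using assms by (simp add: power2_eq_square)

lemma sum_root_unity_sq_coset:
  assumes "p > 1"
  shows "(\<Sum>k<p. root_unity (p\<^sup>2) ^ (t + p * k)) = 0"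
  using sum_root_unity_powers[OF assms] root_unity_sq_power[of p] assms
  by (simp add: power_add power_mult sum_distrib_left[symmetric])

lemma exp_int_eq_root_unity_power:
  assumes "n > 0"
  shows "exp (2 * pi * \<i> * of_int s / of_int (int n)) = root_unity n ^ nat (s mod int n)"
proof -
  have "of_int s = of_int (int n) * of_int (s div int n) + (of_nat (nat (s mod int n)) :: complex)"
    using assms by (metis mult_div_mod_eq of_int_add of_int_mult of_nat_nat pos_mod_sign of_int_of_nat_eq of_nat_0_less_iff)
  then have "2 * pi * \<i> * of_int s / of_int (int n) =
      of_int (s div int n) * (2 * pi * \<i>) + 2 * pi * \<i> * of_nat (nat (s mod int n)) / of_nat n"
    using assms by (simp add: field_simps)
  moreover have "exp (of_int (s div int n) * (2 * pi * \<i>)) = 1"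
    using exp_integer_2pi[of "of_int (s div int n)"] by (simp add: mult_ac)
  ultimately show ?thesis by (simp add: exp_add root_unity_power)
qed

lemma poly_shifted_cyclotomic_sq_root:
  assumes "p > 1"
  shows "poly (map_poly of_int (shifted_cyclotomic_sq p)) (root_unity (p\<^sup>2) - 1) = 0"
proof -
  have "poly (map_poly of_int (shifted_cyclotomic_sq p)) (root_unity (p\<^sup>2) - 1) =
      (\<Sum>k<p. (root_unity (p\<^sup>2) ^ p) ^ k)"
    by (simp add: shifted_cyclotomic_sq_def map_poly_of_int_sum map_poly_of_int_power poly_sum
        map_poly_pCons power_mult)
  also have "\<dots> = 0" using sum_root_unity_powers[OF assms] root_unity_sq_power[of p] assms by simp
  finally show ?thesis .
qed

lemma pcompose_monom: "pcompose (monom c n) q = smult c (q ^ n)"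
  by (induction n) (simp_all add: monom_0 monom_Suc pcompose_pCons)

lemma root_unity_sq_powers_independent:
  assumes "prime p" and "(\<Sum>j<p\<^sup>2 - p. of_int (f j) * root_unity (p\<^sup>2) ^ j) = 0"
    and "j < p\<^sup>2 - p"
  shows "f j = 0"
proof -
  define r where "r = (\<Sum>i<p\<^sup>2 - p. monom (f i) i)"
  have coeff_r: "coeff r i = (if i < p\<^sup>2 - p then f i else 0)" for i
    by (simp add: r_def coeff_sum coeff_monom)
  have "r = 0"
  proof (rule ccontr)
    assume "r \<noteq> 0"
    define r' where "r' = pcompose r [:1, 1:]"
    have "r' = (\<Sum>i<p\<^sup>2 - p. smult (f i) ([:1, 1:] ^ i))"
      by (simp add: r'_def r_def pcompose_sum pcompose_monom)
    then have "poly (map_poly of_int r') (root_unity (p\<^sup>2) - 1) = 0"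
      using assms(2)
      by (simp add: map_poly_of_int_sum map_poly_of_int_smult map_poly_of_int_power poly_sum map_poly_pCons)
    moreover have "r' \<noteq> 0" unfolding r'_def using \<open>r \<noteq> 0\<close> pcompose_eq_0[of r "[:1, 1 :: int:]"] by auto
    moreover have "p > 1" using assms(1) prime_gt_1_nat by blast
    ultimately have "p\<^sup>2 - p \<le> degree r'"
      using irreducible_root_degree_le[OF irreducible_shifted_cyclotomic_sq[OF assms(1)]
          poly_shifted_cyclotomic_sq_root] degree_shifted_cyclotomic_sq[of p] by auto
    moreover have "degree r' = degree r" by (simp add: r'_def degree_pcompose)
    moreover have "degree r < p\<^sup>2 - p"
      using \<open>r \<noteq> 0\<close> coeff_r[of "degree r"] by (metis leading_coeff_0_iff)
    ultimately show False by linarith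
  qed
  then show ?thesis using coeff_r[of j] assms(3) by simp
qed

lemma vanishing_sum_root_unity_sq_periodic:
  fixes c :: "nat \<Rightarrow> int"
  assumes "prime p" and vanish: "(\<Sum>j<p\<^sup>2. of_int (c j) * root_unity (p\<^sup>2) ^ j) = 0" and "j < p\<^sup>2"
  shows "c j = c (j mod p + p * (p - 1))"
proof -
  \<comment> \<open>\<open>d\<close> repeats the top block of \<open>c\<close>; its sum vanishes, and \<open>c - d\<close> vanishes on the top block\<close>
  define d where "d j = c (j mod p + p * (p - 1))" for j
  have "p > 1" using assms(1) prime_gt_1_nat by blast
  have "(\<Sum>j<p\<^sup>2. of_int (d j) * root_unity (p\<^sup>2) ^ j) =
      (\<Sum>k<p. \<Sum>t<p. of_int (d t) * root_unity (p\<^sup>2) ^ (t + p * k))"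
    unfolding power2_eq_square sum_mult_product using \<open>p > 1\<close> by (simp add: d_def mult.commute)
  also have "\<dots> = (\<Sum>t<p. of_int (d t) * (\<Sum>k<p. root_unity (p\<^sup>2) ^ (t + p * k)))"
    by (subst sum.swap) (simp add: sum_distrib_left)
  also have "\<dots> = 0" using sum_root_unity_sq_coset[OF \<open>p > 1\<close>] by simp
  finally have "(\<Sum>j<p\<^sup>2. of_int (c j - d j) * root_unity (p\<^sup>2) ^ j) = 0"
    using vanish by (simp add: sum_subtractf left_diff_distrib)
  moreover have "c j - d j = 0" if "p\<^sup>2 - p \<le> j" "j < p\<^sup>2" for j
  proof -
    have "(p - 1) * p \<le> j" using that by (simp add: power2_eq_square diff_mult_distrib)
    then have "p - 1 \<le> j div p" using \<open>p > 1\<close> div_le_mono[of "(p - 1) * p" j p] by simp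
    moreover have "j div p < p" using that by (simp add: power2_eq_square less_mult_imp_div_less)
    ultimately have "j div p = p - 1" by simp
    then show ?thesis unfolding d_def using mod_mult_div_eq[of j p] by simp
  qed
  ultimately have "(\<Sum>j<p\<^sup>2 - p. of_int (c j - d j) * root_unity (p\<^sup>2) ^ j) = 0"
    by (subst sum.mono_neutral_left[where T = "{..<p\<^sup>2}"]) (auto simp: subset_eq)
  then have "c j - d j = 0" if "j < p\<^sup>2 - p" for j
    using root_unity_sq_powers_independent[OF assms(1), of "\<lambda>j. c j - d j"] that by blast
  with \<open>\<And>j. p\<^sup>2 - p \<le> j \<Longrightarrow> j < p\<^sup>2 \<Longrightarrow> c j - d j = 0\<close> assms(3) show ?thesis
    unfolding d_def by (metis eq_iff_diff_eq_0 not_le)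
qed

lemma sum_power_eq_sum_card_fibres:
  fixes e :: "'a \<Rightarrow> nat" and z :: "'b::comm_semiring_1"
  assumes "finite A" and "\<And>a. a \<in> A \<Longrightarrow> e a < M"
  shows "(\<Sum>a\<in>A. z ^ e a) = (\<Sum>j<M. of_nat (card {a\<in>A. e a = j}) * z ^ j)"
proof -
  have "(\<Sum>a\<in>A. z ^ e a) = (\<Sum>a\<in>A. \<Sum>j<M. if e a = j then z ^ j else 0)"
    using assms(2) by (intro sum.cong) (auto simp: sum.delta)
  also have "\<dots> = (\<Sum>j<M. \<Sum>a\<in>A. if e a = j then z ^ j else 0)" by (rule sum.swap)
  also have "\<dots> = (\<Sum>j<M. of_nat (card {a\<in>A. e a = j}) * z ^ j)"
    using assms(1) by (intro sum.cong) (auto simp: sum.inter_filter[symmetric])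
  finally show ?thesis .
qed

lemma card_residue_fibre_of_vanishing_sum:
  fixes e :: "'a \<Rightarrow> nat"
  assumes "prime p" and "finite A" and bounded: "\<And>a. a \<in> A \<Longrightarrow> e a < p\<^sup>2"
    and "(\<Sum>a\<in>A. root_unity (p\<^sup>2) ^ e a) = 0" and "j < p\<^sup>2"
  shows "card {a\<in>A. e a mod p = j mod p} = p * card {a\<in>A. e a = j}"
proof -
  define cnt where "cnt i = card {a\<in>A. e a = i}" for i
  have "p > 0" using assms(1) prime_gt_0_nat by blast
  have "(\<Sum>i<p\<^sup>2. of_int (int (cnt i)) * root_unity (p\<^sup>2) ^ i) = 0"
    using assms(4) sum_power_eq_sum_card_fibres[OF assms(2) bounded, where z = "root_unity (p\<^sup>2)"] unfolding cnt_def by simp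
  then have periodic: "cnt i = cnt (i mod p + p * (p - 1))" if "i < p\<^sup>2" for i
    using vanishing_sum_root_unity_sq_periodic[OF assms(1), of "\<lambda>i. int (cnt i)"] that by simp
  have fibre: "{a\<in>A. e a mod p = j mod p} = (\<Union>k<p. {a\<in>A. e a = j mod p + p * k})"
  proof (intro set_eqI iffI)
    fix a assume "a \<in> {a\<in>A. e a mod p = j mod p}"
    moreover have "e a div p < p" if "a \<in> A"
      using bounded[OF that] by (simp add: power2_eq_square less_mult_imp_div_less)
    ultimately show "a \<in> (\<Union>k<p. {a\<in>A. e a = j mod p + p * k})"
      using mod_mult_div_eq[of "e a" p] by (auto intro!: bexI[of _ "e a div p"])
  qed auto
  have "card {a\<in>A. e a mod p = j mod p} = (\<Sum>k<p. cnt (j mod p + p * k))"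
    unfolding fibre cnt_def using assms(2) by (subst card_UN_disjoint) auto
  also have "\<dots> = (\<Sum>k<p. cnt j)"
  proof (intro sum.cong refl)
    fix k assume "k \<in> {..<p}"
    then have "p * k + p \<le> p * p" using mult_le_mono2[of "Suc k" p p] by simp
    then have "j mod p + p * k < p\<^sup>2"
      using mod_less_divisor[OF \<open>p > 0\<close>, of j] by (simp add: power2_eq_square)
    then show "cnt (j mod p + p * k) = cnt j"
      using periodic periodic[OF assms(5)] by simp
  qed
  finally show ?thesis unfolding cnt_def by simp
qed

lemma card_residue_class_of_vanishing_exp_sum:
  fixes \<phi> :: "'a \<Rightarrow> int" and p :: int
  assumes "prime p" and "finite A"
    and vanish: "(\<Sum>a\<in>A. exp (2 * pi * \<i> * of_int (\<phi> a) / of_int (p\<^sup>2))) = 0"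
  shows "card {a\<in>A. \<phi> a mod p = s mod p} = nat p * card {a\<in>A. \<phi> a mod p\<^sup>2 = s mod p\<^sup>2}"
proof -
  obtain P where p: "p = int P" using prime_ge_0_int[OF assms(1)] nonneg_int_cases by blast
  with assms(1) have "prime P" by simp
  then have "P > 0" by (simp add: prime_gt_0_nat)
  define e where "e a = nat (\<phi> a mod p\<^sup>2)" for a
  have e: "int (e a) = \<phi> a mod p\<^sup>2" for a using \<open>P > 0\<close> by (simp add: e_def p)
  have e_mod: "int (e a mod P) = \<phi> a mod p" for a
    by (simp add: zmod_int e p[symmetric] mod_mod_cancel power2_eq_square)
  define j where "j = nat (s mod p\<^sup>2)"
  have j: "int j = s mod p\<^sup>2" "int (j mod P) = s mod p"
    using \<open>P > 0\<close> by (simp_all add: j_def p zmod_int mod_mod_cancel power2_eq_square)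
  have "int (e a) < int (P\<^sup>2)" "int j < int (P\<^sup>2)" for a
    unfolding e j(1) using \<open>P > 0\<close> by (simp_all add: p)
  then have "e a < P\<^sup>2" "j < P\<^sup>2" for a by simp_all
  moreover have "(\<Sum>a\<in>A. root_unity (P\<^sup>2) ^ e a) = 0"
    using vanish \<open>P > 0\<close> exp_int_eq_root_unity_power[of "P\<^sup>2"] by (simp add: e_def p)
  ultimately have "card {a\<in>A. e a mod P = j mod P} = P * card {a\<in>A. e a = j}"
    by (intro card_residue_fibre_of_vanishing_sum \<open>prime P\<close> assms(2))
  moreover have "e a mod P = j mod P \<longleftrightarrow> \<phi> a mod p = s mod p" "e a = j \<longleftrightarrow> \<phi> a mod p\<^sup>2 = s mod p\<^sup>2" for a
    using e_mod[of a] j e[of a] by (metis of_nat_eq_iff)+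
  ultimately show ?thesis by (simp add: p)
qed

section \<open>Complements of the non-cyclic Lagrangian\<close>

lemma mod_sq_mem_pH:
  fixes p x y :: int
  assumes "p > 0" and "p dvd x" and "p dvd y"
  shows "(x mod p\<^sup>2, y mod p\<^sup>2) \<in> pH p"
proof -
  have "\<exists>k. z mod p\<^sup>2 = p * k \<and> 0 \<le> k \<and> k < p" if "p dvd z" for z
  proof -
    have "p dvd z mod p\<^sup>2" using that by (simp add: dvd_mod_iff power2_eq_square)
    then obtain k where k: "z mod p\<^sup>2 = p * k" by blast
    have "0 \<le> p * k" "p * k < p * p" using assms(1) by (simp_all add: k[symmetric] power2_eq_square)
    then show ?thesis using k assms(1) by (auto simp: zero_le_mult_iff)
  qed
  then show ?thesis unfolding pH_def using assms(2,3) by blast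
qed

lemma inj_on_mod_complement_pH:
  fixes p :: int
  assumes "prime p" and "complements (p\<^sup>2) A (pH p)"
  shows "inj_on (\<lambda>a. (fst a mod p, snd a mod p)) A"
proof (rule inj_onI)
  fix a a' assume "a \<in> A" "a' \<in> A" and "(fst a mod p, snd a mod p) = (fst a' mod p, snd a' mod p)"
  then have "p dvd fst a - fst a'" "p dvd snd a - snd a'" by (simp_all add: mod_eq_dvd_iff)
  have "p > 0" using assms(1) prime_gt_0_int by blast
  define h where "h = ((fst a - fst a') mod p\<^sup>2, (snd a - snd a') mod p\<^sup>2)"
  have "h \<in> pH p" unfolding h_def by (rule mod_sq_mem_pH) fact+
  have "(0, 0) \<in> pH p" using mod_sq_mem_pH[OF \<open>p > 0\<close>, of 0 0] by simp
  have "a \<in> ZnZn (p\<^sup>2)" and unique: "\<exists>!ah. ah \<in> A \<times> pH p \<and> a = zadd (p\<^sup>2) (fst ah) (snd ah)"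
    using assms(2) \<open>a \<in> A\<close> unfolding complements_def by blast+
  have "zadd (p\<^sup>2) a (0, 0) = a" "zadd (p\<^sup>2) a' h = a"
    using \<open>a \<in> ZnZn (p\<^sup>2)\<close> unfolding zadd_def ZnZn_def h_def by (auto simp: mod_add_right_eq)
  moreover have "(a, (0, 0)) \<in> A \<times> pH p" "(a', h) \<in> A \<times> pH p"
    using \<open>a \<in> A\<close> \<open>a' \<in> A\<close> \<open>h \<in> pH p\<close> \<open>(0, 0) \<in> pH p\<close> by simp_all
  ultimately have "(a, (0, 0)) = (a', h)"
    using unique by (metis fst_conv snd_conv)
  then show "a = a'" by simp
qed

lemma diff_set_nonzero_mod_prime:
  fixes p :: int
  assumes "prime p" and "complements (p\<^sup>2) A (pH p)" and "\<xi> \<in> diff_set (p\<^sup>2) A"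
  shows "\<not> (p dvd fst \<xi> \<and> p dvd snd \<xi>)"
proof
  assume "p dvd fst \<xi> \<and> p dvd snd \<xi>"
  obtain a a' where "a \<in> A" "a' \<in> A" "a \<noteq> a'" and \<xi>: "\<xi> = zsub (p\<^sup>2) a a'"
    using assms(3) unfolding diff_set_def by blast
  have "p dvd p\<^sup>2" by (simp add: power2_eq_square)
  with \<open>p dvd fst \<xi> \<and> p dvd snd \<xi>\<close> have "p dvd fst a - fst a'" "p dvd snd a - snd a'"
    unfolding \<xi> zsub_def by (simp_all add: dvd_mod_iff)
  then have "(fst a mod p, snd a mod p) = (fst a' mod p, snd a' mod p)"
    by (simp add: mod_eq_dvd_iff)
  then show False
    using inj_onD[OF inj_on_mod_complement_pH[OF assms(1,2)] _ \<open>a \<in> A\<close> \<open>a' \<in> A\<close>] \<open>a \<noteq> a'\<close>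
    by blast
qed

lemma card_symp_residue_le:
  fixes p t :: int
  assumes "prime p" and "complements (p\<^sup>2) A (pH p)" and "\<not> (p dvd fst \<xi> \<and> p dvd snd \<xi>)"
  shows "card {a\<in>A. symp a \<xi> mod p = t} \<le> nat p"
proof -
  \<comment> \<open>as \<open>\<xi>\<close> is nonzero mod \<open>p\<close>, one coordinate of \<open>a\<close> mod \<open>p\<close> and \<open>symp a \<xi>\<close> mod \<open>p\<close> determine \<open>a\<close> mod \<open>p\<close>\<close>
  define coord where "coord a = (if p dvd fst \<xi> then snd a mod p else fst a mod p)" for a :: "int \<times> int"
  have "inj_on coord {a\<in>A. symp a \<xi> mod p = t}"
  proof (rule inj_onI)
    fix a a' assume a: "a \<in> {a\<in>A. symp a \<xi> mod p = t}" and a': "a' \<in> {a\<in>A. symp a \<xi> mod p = t}"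
      and "coord a = coord a'"
    have "p dvd symp a \<xi> - symp a' \<xi>" using a a' by (simp add: mod_eq_dvd_iff[symmetric])
    moreover have "symp a \<xi> - symp a' \<xi> = (fst a - fst a') * snd \<xi> - (snd a - snd a') * fst \<xi>"
      unfolding symp_def by (simp add: algebra_simps)
    ultimately have "p dvd (fst a - fst a') * snd \<xi> - (snd a - snd a') * fst \<xi>" by simp
    then have "p dvd fst a - fst a' \<and> p dvd snd a - snd a'"
    proof (cases "p dvd fst \<xi>")
      case True
      then have "p dvd snd a - snd a'" and "\<not> p dvd snd \<xi>"
        using \<open>coord a = coord a'\<close> assms(3) unfolding coord_def by (simp_all add: mod_eq_dvd_iff)
      then have "p dvd (fst a - fst a') * snd \<xi>"
        using dvd_add[OF \<open>p dvd (fst a - fst a') * snd \<xi> - (snd a - snd a') * fst \<xi>\<close>,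
            of "(snd a - snd a') * fst \<xi>"] by simp
      with \<open>p dvd snd a - snd a'\<close> \<open>\<not> p dvd snd \<xi>\<close> assms(1) show ?thesis
        by (simp add: prime_dvd_mult_iff)
    next
      case False
      then have "p dvd fst a - fst a'"
        using \<open>coord a = coord a'\<close> unfolding coord_def by (simp add: mod_eq_dvd_iff)
      then have "p dvd (snd a - snd a') * fst \<xi>"
        using dvd_diff[OF _ \<open>p dvd (fst a - fst a') * snd \<xi> - (snd a - snd a') * fst \<xi>\<close>,
            of "(fst a - fst a') * snd \<xi>"] by simp
      with \<open>p dvd fst a - fst a'\<close> False assms(1) show ?thesis
        by (simp add: prime_dvd_mult_iff)
    qed
    then have "(fst a mod p, snd a mod p) = (fst a' mod p, snd a' mod p)"
      by (simp add: mod_eq_dvd_iff)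
    then show "a = a'"
      using inj_onD[OF inj_on_mod_complement_pH[OF assms(1,2)]] a a' by blast
  qed
  moreover have "coord ` {a\<in>A. symp a \<xi> mod p = t} \<subseteq> {0..<p}"
    using assms(1) prime_gt_0_int[of p] unfolding coord_def by auto
  ultimately have "card {a\<in>A. symp a \<xi> mod p = t} \<le> card {0..<p}"
    by (intro card_inj_on_le) simp_all
  then show ?thesis by simp
qed

lemma symp_zsub_mod_eq: "symp a (zsub n a a') mod n = symp a' (zsub n a a') mod n"
proof -
  define u w where "u = (fst a - fst a') mod n" and "w = (snd a - snd a') mod n"
  have "(fst a - fst a') * w mod n = u * w mod n" "(snd a - snd a') * u mod n = w * u mod n"
    unfolding u_def w_def by (simp_all add: mod_mult_left_eq)
  then have "((fst a - fst a') * w - (snd a - snd a') * u) mod n = (u * w - w * u) mod n"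
    by (rule mod_diff_cong)
  moreover have "symp a (u, w) - symp a' (u, w) = (fst a - fst a') * w - (snd a - snd a') * u"
    unfolding symp_def by (simp add: algebra_simps)
  ultimately have "n dvd symp a (u, w) - symp a' (u, w)"
    by (simp add: dvd_eq_mod_eq_0)
  then have "symp a (u, w) mod n = symp a' (u, w) mod n"
    by (simp add: mod_eq_dvd_iff)
  then show ?thesis by (simp add: zsub_def u_def w_def)
qed

theorem mainTheorem3:
  fixes p :: int and A :: "(int \<times> int) set"
  assumes "prime p"
    and "complements (p ^ 2) A (pH p)"
  shows "diff_set (p ^ 2) A \<inter> zero_set (p ^ 2) A = {}"
proof -
  have "A \<subseteq> ZnZn (p\<^sup>2)" using assms(2) by (simp add: complements_def)
  then have "finite A" by (rule finite_subset) (simp add: ZnZn_def)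
  have "\<xi> \<notin> zero_set (p\<^sup>2) A" if "\<xi> \<in> diff_set (p\<^sup>2) A" for \<xi>
  proof
    assume "\<xi> \<in> zero_set (p\<^sup>2) A"
    then have vanish: "sym_ft (p\<^sup>2) A \<xi> = 0" by (simp add: zero_set_def)
    obtain a a' where "a \<in> A" "a' \<in> A" "a \<noteq> a'" and \<xi>: "\<xi> = zsub (p\<^sup>2) a a'"
      using \<open>\<xi> \<in> diff_set (p\<^sup>2) A\<close> unfolding diff_set_def by blast
    define s where "s = symp a \<xi>"
    have "{a, a'} \<subseteq> {b\<in>A. symp b \<xi> mod p\<^sup>2 = s mod p\<^sup>2}"
      using \<open>a \<in> A\<close> \<open>a' \<in> A\<close> symp_zsub_mod_eq[of a "p\<^sup>2" a'] by (simp add: s_def \<xi>)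
    then have "card {a, a'} \<le> card {b\<in>A. symp b \<xi> mod p\<^sup>2 = s mod p\<^sup>2}"
      using \<open>finite A\<close> by (intro card_mono) simp_all
    then have "2 * nat p \<le> card {b\<in>A. symp b \<xi> mod p = s mod p}"
      using \<open>a \<noteq> a'\<close> card_residue_class_of_vanishing_exp_sum[OF assms(1) \<open>finite A\<close>,
          of "\<lambda>b. symp b \<xi>" s] vanish
      by (simp add: sym_ft_def)
    moreover have "card {b\<in>A. symp b \<xi> mod p = s mod p} \<le> nat p"
      using card_symp_residue_le[OF assms diff_set_nonzero_mod_prime[OF assms that]] .
    moreover have "nat p > 0" using assms(1) prime_gt_0_int by simp
    ultimately show False by linarith
  qed
  then show ?thesis by blast
qed

end
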